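(* Let $\mathcal A=\{a_1,\dots,a_m\}\subseteq(\mathbb Z^d)^*$ be vectors such that there exist $\lambda_1,\dots,\lambda_m\ge0$, not all $0$, with $\sum_i\lambda_ia_i=0$, let $A$ be the $m\times d$ matrix with rows $a_1,\dots,a_m$, let $\mathbf 1\in\mathbb R^m$ be the all-ones vector, and let $\varepsilon>0$. Then the set \[ \{c\in\mathbb R\mid 0<c\le\varepsilon^{-1}\text{ and } Ax+c\mathbf 1\in\mathbb Z^m\text{ for some }x\in\mathbb R^d\} \] is finite. Moreover, if $P$ is a $d$-dimensional lattice polytope with core normals $a_1,\dots,a_m$ and $c=\operatorname{qcd}(P)^{-1}$, then there is a rational $y$ with $Ay+c\mathbf 1\in\mathbb Z^m$.
   Context: A $d$-dimensional lattice polytope is written $P=\{x\in\mathbb R^d\mid \langle a_i,x\rangle\le b_i,\ 1\le i\le n\}$ with an irredundant system, primitive $a_i\in(\mathbb Z^d)^*$ and (since $P$ is a lattice polytope) integers $b_i$. For rational $c>0$, $P^{(c)}=\{x\mid \langle a_i,x\rangle\le b_i-c\ \forall i\}$; $\operatorname{qcd}(P)^{-1}=\max\{c>0\mid P^{(c)}\ne\emptyset\}$; with $c_0=\operatorname{qcd}(P)^{-1}$, $\operatorname{core}P=P^{(c_0)}$, and the core normals are those $a_i$ with $\langle a_i,y\rangle=b_i-c_0$ for all $y\in\operatorname{core}P$. *)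

theory Defs
  imports "HOL-Analysis.Analysis"
begin

text \<open>Integral vectors (elements of the lattice Z^d, or of its dual identified with Z^d
  via the standard inner product).\<close>
definition integral_vec :: "real^'d \<Rightarrow> bool" where
  "integral_vec v \<longleftrightarrow> (\<forall>j. v $ j \<in> \<int>)"

definition rational_vec :: "real^'d \<Rightarrow> bool" where
  "rational_vec v \<longleftrightarrow> (\<forall>j. v $ j \<in> \<rat>)"

definition primitive_vec :: "real^'d \<Rightarrow> bool" where
  "primitive_vec v \<longleftrightarrow> integral_vec v \<and> v \<noteq> 0 \<and>
     (\<forall>k::int. k \<ge> 2 \<longrightarrow> \<not> integral_vec ((1 / real_of_int k) *\<^sub>R v))"

definition polyh :: "nat \<Rightarrow> (nat \<Rightarrow> real^'d) \<Rightarrow> (nat \<Rightarrow> real) \<Rightarrow> (real^'d) set" where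
  "polyh n a b = {x. \<forall>i<n. a i \<bullet> x \<le> b i}"

definition irredundant :: "nat \<Rightarrow> (nat \<Rightarrow> real^'d) \<Rightarrow> (nat \<Rightarrow> real) \<Rightarrow> bool" where
  "irredundant n a b \<longleftrightarrow>
     (\<forall>i<n. {x. \<forall>k<n. k \<noteq> i \<longrightarrow> a k \<bullet> x \<le> b k} \<noteq> polyh n a b)"

definition lattice_polytope :: "(real^'d) set \<Rightarrow> bool" where
  "lattice_polytope P \<longleftrightarrow> (\<exists>S. finite S \<and> (\<forall>v\<in>S. integral_vec v) \<and> P = convex hull S)"

definition shrunk :: "nat \<Rightarrow> (nat \<Rightarrow> real^'d) \<Rightarrow> (nat \<Rightarrow> real) \<Rightarrow> real \<Rightarrow> (real^'d) set" where
  "shrunk n a b c = {x. \<forall>i<n. a i \<bullet> x \<le> b i - c}"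

definition qcd_inv :: "nat \<Rightarrow> (nat \<Rightarrow> real^'d) \<Rightarrow> (nat \<Rightarrow> real) \<Rightarrow> real" where
  "qcd_inv n a b = (GREATEST c. c > 0 \<and> shrunk n a b c \<noteq> {})"

definition core :: "nat \<Rightarrow> (nat \<Rightarrow> real^'d) \<Rightarrow> (nat \<Rightarrow> real) \<Rightarrow> (real^'d) set" where
  "core n a b = shrunk n a b (qcd_inv n a b)"

definition core_normal_idx :: "nat \<Rightarrow> (nat \<Rightarrow> real^'d) \<Rightarrow> (nat \<Rightarrow> real) \<Rightarrow> nat set" where
  "core_normal_idx n a b =
     {i. i < n \<and> (\<forall>y\<in>core n a b. a i \<bullet> y = b i - qcd_inv n a b)}"

end

theory Submission
  imports Defs
begin

text \<open>
  Both parts rest on an additive map \<open>\<phi> : \<real> \<rightarrow> \<rat>\<close> with \<open>\<phi> 1 = 1\<close>, a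
  \<open>\<rat>\<close>-linear projection along a Hamel basis containing 1. It fixes the integers and,
  applied coordinatewise, commutes with \<open>x \<mapsto> \<langle>a, x\<rangle>\<close> for integral \<open>a\<close>.

  For the first part, applying \<open>\<phi>\<close> to the normalised dependence \<open>\<lambda> / \<Sum>\<lambda>\<^sub>i\<close>
  gives rational weights \<open>\<mu>\<close> with \<open>\<Sum>\<mu>\<^sub>i = 1\<close> and \<open>\<Sum>\<mu>\<^sub>i a\<^sub>i = 0\<close>. Then
  \<open>c = \<Sum>\<mu>\<^sub>i (\<langle>a\<^sub>i, x\<rangle> + c)\<close> lies in \<open>\<int>/D\<close> for a common denominator \<open>D\<close>
  of the \<open>\<mu>\<^sub>i\<close>, and a bounded interval contains only finitely many such \<open>c\<close>.

  For the second part, the core contains a point \<open>y\<^sub>0\<close> strictly inside every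
  non-core inequality. If \<open>\<langle>a\<^sub>i, y\<rangle> + c = b\<^sub>i\<close> on the core normals with \<open>c \<noteq> c\<^sub>0\<close>,
  moving \<open>y\<^sub>0\<close> slightly along \<open>\<plusminus>(y - y\<^sub>0)\<close> would satisfy all inequalities
  shrunk by more than \<open>c\<^sub>0 = qcd(P)\<^sup>-\<^sup>1\<close>; so \<open>c\<^sub>0\<close> is the only possible shift.
  Applying \<open>\<phi>\<close> to \<open>y\<^sub>0\<close> yields a solution with shift \<open>\<phi>(c\<^sub>0)\<close>, hence
  \<open>\<phi>(c\<^sub>0) = c\<^sub>0\<close> and \<open>\<phi>(y\<^sub>0)\<close> is rational.
\<close>

locale rat_projection = additive \<phi> for \<phi> :: "real \<Rightarrow> real" +
  assumes one: "\<phi> 1 = 1"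
    and rational: "\<phi> x \<in> \<rat>"
begin

lemma mult_of_int: "\<phi> (of_int k * x) = of_int k * \<phi> x"
proof (induction k rule: int_induct[where k = 0])
  case base
  then show ?case by (simp add: zero)
next
  case (step1 i)
  then show ?case by (simp add: add distrib_right)
next
  case (step2 i)
  then show ?case by (simp add: diff left_diff_distrib)
qed

lemma mult_Ints: "k \<in> \<int> \<Longrightarrow> \<phi> (k * x) = k * \<phi> x"
  by (elim Ints_cases) (simp add: mult_of_int)

lemma Ints_fixed: "k \<in> \<int> \<Longrightarrow> \<phi> k = k"
  using mult_Ints[of k 1] by (simp add: one)

lemma inner_integral_vec:
  fixes v y :: "real^'d"
  assumes "integral_vec v"
  shows "v \<bullet> (\<chi> j. \<phi> (y $ j)) = \<phi> (v \<bullet> y)"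
  using assms by (simp add: inner_vec_def integral_vec_def sum mult_Ints)

end

lemma rat_projection_exists: "\<exists>\<phi>. rat_projection \<phi>"
proof -
  interpret rr: vector_space_pair "\<lambda>q (x::real). of_rat q * x" "\<lambda>q (r::rat). q * r"
    by unfold_locales (auto simp: algebra_simps of_rat_add of_rat_mult)
  have indep: "rr.vs1.independent {1::real}"
    by (rule rr.vs1.independent_insertI) (auto simp: rr.vs1.span_empty rr.vs1.independent_empty)
  define f where "f = rr.construct {1::real} (\<lambda>_. 1)"
  have "Vector_Spaces.linear (\<lambda>q (x::real). of_rat q * x) (\<lambda>q r. q * r) f"
    unfolding f_def by (rule rr.linear_construct[OF indep])
  then have "f (x + y) = f x + f y" for x y
    by (simp add: Vector_Spaces.linear_def module_hom_def module_hom_axioms_def)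
  moreover have "f 1 = 1"
    unfolding f_def by (rule rr.construct_basis[OF indep]) simp
  ultimately have "rat_projection (\<lambda>x. of_rat (f x))"
    by unfold_locales (auto simp: of_rat_add)
  then show ?thesis by blast
qed

lemma common_denominator:
  assumes "finite A" "\<forall>i\<in>A. \<mu> i \<in> \<rat>"
  shows "\<exists>D::int. D > 0 \<and> (\<forall>i\<in>A. of_int D * \<mu> i \<in> \<int>)"
  using assms
proof (induction A rule: finite_induct)
  case empty
  show ?case by (intro exI[of _ 1]) auto
next
  case (insert j A)
  then obtain D :: int where D: "D > 0" "\<forall>i\<in>A. of_int D * \<mu> i \<in> \<int>" by auto
  have "\<mu> j \<in> \<rat>" using insert.prems by simp
  then obtain p q :: int where pq: "q > 0" "\<mu> j = of_int p / of_int q"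
    by (elim Rats_cases') simp
  have "of_int (D * q) * \<mu> i \<in> \<int>" if "i \<in> insert j A" for i
  proof (cases "i = j")
    case True
    then have "of_int (D * q) * \<mu> i = of_int (D * p)" using pq by (simp add: field_simps)
    then show ?thesis by (metis Ints_of_int)
  next
    case False
    then have "of_int D * \<mu> i \<in> \<int>" using D that by simp
    moreover have "of_int (D * q) * \<mu> i = of_int q * (of_int D * \<mu> i)" by simp
    ultimately show ?thesis by (metis Ints_mult Ints_of_int)
  qed
  then show ?case using D pq by (intro exI[of _ "D * q"]) simp
qed

lemma rational_affine_dependence:
  fixes a :: "nat \<Rightarrow> real^'d"
  assumes "\<forall>i<m. integral_vec (a i)" "(\<Sum>i<m. l i *\<^sub>R a i) = 0" "(\<Sum>i<m. l i) \<noteq> 0"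
  shows "\<exists>\<mu>. (\<forall>i. \<mu> i \<in> \<rat>) \<and> (\<Sum>i<m. \<mu> i) = 1 \<and> (\<Sum>i<m. \<mu> i *\<^sub>R a i) = 0"
proof -
  obtain \<phi> where "rat_projection \<phi>" using rat_projection_exists ..
  then interpret rat_projection \<phi> .
  define s where "s = (\<Sum>i<m. l i)"
  define \<mu> where "\<mu> i = \<phi> (l i / s)" for i
  have "(\<Sum>i<m. \<mu> i) = \<phi> (\<Sum>i<m. l i / s)" by (simp add: \<mu>_def sum)
  also have "(\<Sum>i<m. l i / s) = 1" using assms(3) by (simp add: s_def flip: sum_divide_distrib)
  finally have "(\<Sum>i<m. \<mu> i) = 1" by (simp add: one)
  moreover have "(\<Sum>i<m. \<mu> i * a i $ j) = 0" for j
  proof -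
    have "(\<Sum>i<m. \<mu> i * a i $ j) = \<phi> (\<Sum>i<m. a i $ j * (l i / s))"
      using assms(1) unfolding sum \<mu>_def
      by (intro sum.cong) (auto simp: mult_Ints integral_vec_def mult.commute simp del: times_divide_eq_right)
    also have "(\<Sum>i<m. a i $ j * (l i / s)) = (\<Sum>i<m. l i * a i $ j) / s"
      by (simp add: sum_divide_distrib mult.commute)
    also have "(\<Sum>i<m. l i * a i $ j) = 0" using arg_cong[OF assms(2), of "\<lambda>v. v $ j"] by simp
    finally show ?thesis by (simp add: zero)
  qed
  then have "(\<Sum>i<m. \<mu> i *\<^sub>R a i) = 0" by (simp add: vec_eq_iff)
  ultimately show ?thesis by (intro exI[of _ \<mu>]) (simp add: \<mu>_def rational)
qed

lemma lattice_shift_common_denominator: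
  fixes a :: "nat \<Rightarrow> real^'d"
  assumes "\<forall>i<m. integral_vec (a i)" "(\<Sum>i<m. l i *\<^sub>R a i) = 0" "(\<Sum>i<m. l i) \<noteq> 0"
  shows "\<exists>D::int. D > 0 \<and> (\<forall>x c. (\<forall>i<m. a i \<bullet> x + c \<in> \<int>) \<longrightarrow> of_int D * c \<in> \<int>)"
proof -
  obtain \<mu> where \<mu>: "\<forall>i. \<mu> i \<in> \<rat>" "(\<Sum>i<m. \<mu> i) = 1" "(\<Sum>i<m. \<mu> i *\<^sub>R a i) = 0"
    using rational_affine_dependence[OF assms] by blast
  obtain D :: int where D: "D > 0" "\<forall>i<m. of_int D * \<mu> i \<in> \<int>"
    using common_denominator[of "{..<m}" \<mu>] \<mu>(1) by auto
  have "of_int D * c \<in> \<int>" if x: "\<forall>i<m. a i \<bullet> x + c \<in> \<int>" for x c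
  proof -
    have "(\<Sum>i<m. \<mu> i * (a i \<bullet> x + c)) = (\<Sum>i<m. \<mu> i *\<^sub>R a i) \<bullet> x + (\<Sum>i<m. \<mu> i) * c"
      by (simp add: algebra_simps sum.distrib sum_distrib_left inner_sum_left)
    then have "(\<Sum>i<m. \<mu> i * (a i \<bullet> x + c)) = c" using \<mu>(2,3) by simp
    then have "of_int D * c = of_int D * (\<Sum>i<m. \<mu> i * (a i \<bullet> x + c))" by simp
    also have "\<dots> = (\<Sum>i<m. (of_int D * \<mu> i) * (a i \<bullet> x + c))"
      by (simp add: sum_distrib_left mult.assoc)
    also have "\<dots> \<in> \<int>"
    proof (rule Ints_sum)
      fix i assume "i \<in> {..<m}"
      show "(of_int D * \<mu> i) * (a i \<bullet> x + c) \<in> \<int>"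
        by (rule Ints_mult) (use D x \<open>i \<in> {..<m}\<close> in auto)
    qed
    finally show ?thesis .
  qed
  then show ?thesis using D by blast
qed

lemma finite_bounded_Ints_scaled:
  assumes "D > 0"
  shows "finite {c::real. 0 < c \<and> c \<le> B \<and> of_int D * c \<in> \<int>}"
proof (rule finite_subset)
  show "{c. 0 < c \<and> c \<le> B \<and> of_int D * c \<in> \<int>} \<subseteq> (\<lambda>k. of_int k / of_int D) ` {0..\<lceil>of_int D * B\<rceil>}"
  proof
    fix c assume c: "c \<in> {c. 0 < c \<and> c \<le> B \<and> of_int D * c \<in> \<int>}"
    then obtain k where k: "of_int D * c = of_int k" by (auto elim: Ints_cases)
    have "0 < of_int D * c" "of_int D * c \<le> of_int D * B"
      using c assms by (auto intro: mult_left_mono)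
    then have "k \<in> {0..\<lceil>of_int D * B\<rceil>}"
      unfolding k by (simp add: le_ceiling_iff)
    moreover have "c = of_int k / of_int D" using k assms by (simp add: field_simps)
    ultimately show "c \<in> (\<lambda>k. of_int k / of_int D) ` {0..\<lceil>of_int D * B\<rceil>}"
      by (intro rev_image_eqI[of k]) auto
  qed
qed simp

lemma polyh_eq_shrunk_0: "polyh n a b = shrunk n a b 0"
  by (simp add: polyh_def shrunk_def)

lemma shrunk_subset_polyh: "0 \<le> c \<Longrightarrow> shrunk n a b c \<subseteq> polyh n a b"
  by (force simp: shrunk_def polyh_def)

lemma convex_shrunk: "convex (shrunk n a b c)"
proof -
  have "shrunk n a b c = (\<Inter>i<n. {x. a i \<bullet> x \<le> b i - c})"
    by (auto simp: shrunk_def)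
  then show ?thesis by (simp add: convex_INT convex_halfspace_le)
qed

lemma interior_polyh_strict:
  assumes "x0 \<in> interior (polyh n a b)" "i < n" "a i \<noteq> 0"
  shows "a i \<bullet> x0 < b i"
proof -
  obtain e where e: "e > 0" "ball x0 e \<subseteq> polyh n a b"
    using assms(1) mem_interior by blast
  define w where "w = x0 + (e / 2 / norm (a i)) *\<^sub>R a i"
  have "dist x0 w < e" using e assms(3) by (simp add: w_def dist_norm)
  then have "a i \<bullet> w \<le> b i" using e assms(2) by (auto simp: polyh_def)
  moreover have "a i \<bullet> w = a i \<bullet> x0 + e / 2 * norm (a i)"
    using assms(3) by (simp add: w_def inner_add_right power2_norm_eq_inner[symmetric] power2_eq_square)
  moreover have "e / 2 * norm (a i) > 0" using e assms(3) by simp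
  ultimately show ?thesis by linarith
qed

lemma shrunk_nonempty_of_interior:
  assumes "x0 \<in> interior (polyh n a b)" "\<forall>i<n. a i \<noteq> 0"
  shows "\<exists>c>0. x0 \<in> shrunk n a b c"
proof -
  define c where "c = Min (insert 1 ((\<lambda>i. b i - a i \<bullet> x0) ` {..<n}))"
  have "c > 0" using interior_polyh_strict[OF assms(1)] assms(2) by (simp add: c_def)
  moreover have "c \<le> b i - a i \<bullet> x0" if "i < n" for i
    using that by (simp add: c_def)
  ultimately show ?thesis by (force simp: shrunk_def)
qed

lemma shrunk_greatest_exists:
  assumes "bounded (polyh n a b)" "c > 0" "shrunk n a b c \<noteq> {}"
  shows "\<exists>c0>0. shrunk n a b c0 \<noteq> {} \<and> (\<forall>c'>0. shrunk n a b c' \<noteq> {} \<longrightarrow> c' \<le> c0)"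
proof -
  define T where "T = {(x, c). x \<in> shrunk n a b c \<and> 0 \<le> c}"
  have "n > 0"
  proof (rule ccontr)
    assume "\<not> n > 0"
    then have "polyh n a b = UNIV" by (simp add: polyh_def)
    with assms(1) show False by (simp add: not_bounded_UNIV)
  qed
  obtain R where R: "\<forall>x\<in>polyh n a b. norm x \<le> R" using assms(1) bounded_iff by blast
  have "T \<subseteq> cball 0 R \<times> {0..b 0 + norm (a 0) * R}"
  proof
    fix p assume "p \<in> T"
    then obtain x c where p: "p = (x, c)" "x \<in> shrunk n a b c" "0 \<le> c" by (auto simp: T_def)
    then have "norm x \<le> R" using R shrunk_subset_polyh by blast
    moreover have "c \<le> b 0 - a 0 \<bullet> x" using p \<open>n > 0\<close> by (auto simp: shrunk_def)
    moreover have "\<bar>a 0 \<bullet> x\<bar> \<le> norm (a 0) * R"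
      using Cauchy_Schwarz_ineq2[of "a 0" x] mult_left_mono[OF \<open>norm x \<le> R\<close>, of "norm (a 0)"]
      by simp
    ultimately show "p \<in> cball 0 R \<times> {0..b 0 + norm (a 0) * R}" using p by auto
  qed
  then have "bounded T"
    by (rule bounded_subset[rotated]) (intro bounded_Times bounded_cball bounded_closed_interval)
  moreover have "closed T"
  proof -
    have T: "T = (\<Inter>i<n. {p. a i \<bullet> fst p + snd p \<le> b i}) \<inter> {p. 0 \<le> snd p}"
      by (auto simp: T_def shrunk_def algebra_simps)
    show ?thesis
      unfolding T by (intro closed_Int closed_INT ballI closed_Collect_le continuous_intros)
  qed
  ultimately have "compact T" by (simp add: compact_eq_bounded_closed)
  obtain x where "(x, c) \<in> T" using assms(2,3) by (auto simp: T_def)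
  then obtain p where p: "p \<in> T" "\<forall>q\<in>T. snd q \<le> snd p"
    using continuous_attains_sup[OF \<open>compact T\<close> _ continuous_on_snd[OF continuous_on_id]] by blast
  have "c \<le> snd p" using p(2) \<open>(x, c) \<in> T\<close> by force
  moreover have "shrunk n a b (snd p) \<noteq> {}" using p(1) by (auto simp: T_def)
  moreover have "c' \<le> snd p" if "c' > 0" "shrunk n a b c' \<noteq> {}" for c'
    using that p(2) by (force simp: T_def)
  ultimately show ?thesis using assms(2) by (intro exI[of _ "snd p"]) auto
qed

lemma qcd_inv_greatest:
  assumes "bounded (polyh n a b)" "c > 0" "shrunk n a b c \<noteq> {}"
  shows "qcd_inv n a b > 0" "shrunk n a b (qcd_inv n a b) \<noteq> {}"
    and "\<And>c'. c' > 0 \<Longrightarrow> shrunk n a b c' \<noteq> {} \<Longrightarrow> c' \<le> qcd_inv n a b"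
proof -
  obtain c0 where c0: "c0 > 0" "shrunk n a b c0 \<noteq> {}" "\<forall>c'>0. shrunk n a b c' \<noteq> {} \<longrightarrow> c' \<le> c0"
    using shrunk_greatest_exists[OF assms] by blast
  then have "qcd_inv n a b = c0" unfolding qcd_inv_def by (intro Greatest_equality) auto
  with c0 show "qcd_inv n a b > 0" "shrunk n a b (qcd_inv n a b) \<noteq> {}"
    and "\<And>c'. c' > 0 \<Longrightarrow> shrunk n a b c' \<noteq> {} \<Longrightarrow> c' \<le> qcd_inv n a b" by auto
qed

lemma convex_common_strict_point:
  fixes a :: "'i \<Rightarrow> 'a::real_inner"
  assumes "convex S" "S \<noteq> {}" "finite J"
    and "\<forall>j\<in>J. \<forall>y\<in>S. a j \<bullet> y \<le> \<beta> j" "\<forall>j\<in>J. \<exists>y\<in>S. a j \<bullet> y < \<beta> j"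
  shows "\<exists>y\<in>S. \<forall>j\<in>J. a j \<bullet> y < \<beta> j"
  using assms(3-5)
proof (induction J rule: finite_induct)
  case empty
  then show ?case using assms(2) by auto
next
  case (insert j J)
  then obtain y where y: "y \<in> S" "\<forall>k\<in>J. a k \<bullet> y < \<beta> k" by auto
  obtain y' where y': "y' \<in> S" "a j \<bullet> y' < \<beta> j" using insert.prems by auto
  define z where "z = (1/2) *\<^sub>R y + (1/2) *\<^sub>R y'"
  have "z \<in> S" using assms(1) y(1) y'(1) unfolding z_def by (intro convexD) auto
  moreover have "a k \<bullet> z < \<beta> k" if "k \<in> insert j J" for k
  proof -
    have "a k \<bullet> z = (a k \<bullet> y + a k \<bullet> y') / 2" by (simp add: z_def inner_add_right)
    moreover have "a k \<bullet> y \<le> \<beta> k" "a k \<bullet> y' \<le> \<beta> k" using insert.prems that y(1) y'(1) by auto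
    ultimately show ?thesis using that y(2) y'(2) by auto
  qed
  ultimately show ?case by blast
qed

lemma core_shift_unique:
  assumes greatest: "\<And>c'. c' > 0 \<Longrightarrow> shrunk n a b c' \<noteq> {} \<Longrightarrow> c' \<le> c0" and "c0 > 0"
    and tight: "\<forall>i\<in>I. a i \<bullet> y0 = b i - c0"
    and strict: "\<forall>j<n. j \<notin> I \<longrightarrow> a j \<bullet> y0 < b j - c0"
    and solution: "\<forall>i\<in>I. a i \<bullet> y + c = b i"
  shows "c = c0"
proof (rule ccontr)
  assume "c \<noteq> c0"
  define t where "t = \<bar>c - c0\<bar>"
  define v where "v = sgn (c - c0) *\<^sub>R (y - y0)"
  have "t > 0" using \<open>c \<noteq> c0\<close> by (simp add: t_def)
  have tight_v: "a i \<bullet> v = - t" if "i \<in> I" for i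
  proof -
    have "a i \<bullet> y = b i - c" "a i \<bullet> y0 = b i - c0" using that tight solution by force+
    then have "a i \<bullet> v = sgn (c - c0) * (c0 - c)" by (simp add: v_def inner_diff_right)
    then show ?thesis by (simp add: t_def abs_sgn algebra_simps)
  qed
  define J where "J = {j. j < n \<and> j \<notin> I}"
  have "\<forall>\<^sub>F s in at_right 0. a j \<bullet> y0 + s * (a j \<bullet> v + t) < b j - c0" if "j \<in> J" for j
  proof (rule order_tendstoD(2))
    show "((\<lambda>s. a j \<bullet> y0 + s * (a j \<bullet> v + t)) \<longlongrightarrow> a j \<bullet> y0) (at_right 0)"
      by (auto intro!: tendsto_eq_intros)
    show "a j \<bullet> y0 < b j - c0" using strict that by (simp add: J_def)
  qed
  then have "\<forall>\<^sub>F s in at_right 0. 0 < s \<and> (\<forall>j\<in>J. a j \<bullet> y0 + s * (a j \<bullet> v + t) < b j - c0)"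
    by (intro eventually_conj eventually_at_right_less eventually_ball_finite) (auto simp: J_def)
  then obtain s where s: "0 < s" "\<forall>j\<in>J. a j \<bullet> y0 + s * (a j \<bullet> v + t) < b j - c0"
    using eventually_happens' trivial_limit_at_right_real by blast
  have "y0 + s *\<^sub>R v \<in> shrunk n a b (c0 + s * t)"
  proof -
    have "a i \<bullet> (y0 + s *\<^sub>R v) \<le> b i - (c0 + s * t)" if "i < n" for i
    proof (cases "i \<in> I")
      case True
      then show ?thesis using tight tight_v by (simp add: inner_add_right)
    next
      case False
      then show ?thesis using s(2) that by (auto simp: J_def algebra_simps)
    qed
    then show ?thesis by (simp add: shrunk_def)
  qed
  then have "c0 + s * t \<le> c0"
    using \<open>c0 > 0\<close> \<open>t > 0\<close> s(1) by (intro greatest) (auto simp: add_pos_pos)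
  then show False using mult_pos_pos[OF s(1) \<open>t > 0\<close>] by linarith
qed

lemma rational_solution_of_rigid_system:
  fixes a :: "nat \<Rightarrow> real^'d"
  assumes "\<forall>i\<in>I. integral_vec (a i)" "\<forall>i\<in>I. b i \<in> \<int>"
    and "\<forall>i\<in>I. a i \<bullet> y0 + c0 = b i"
    and rigid: "\<forall>y c. (\<forall>i\<in>I. a i \<bullet> y + c = b i) \<longrightarrow> c = c0"
  shows "\<exists>y. rational_vec y \<and> (\<forall>i\<in>I. a i \<bullet> y + c0 = b i)"
proof -
  obtain \<phi> where "rat_projection \<phi>" using rat_projection_exists ..
  then interpret rat_projection \<phi> .
  define y where "y = (\<chi> j. \<phi> (y0 $ j))"
  have "a i \<bullet> y + \<phi> c0 = b i" if "i \<in> I" for i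
  proof -
    have "a i \<bullet> y + \<phi> c0 = \<phi> (a i \<bullet> y0 + c0)"
      using assms(1) that by (simp add: y_def inner_integral_vec add)
    also have "\<dots> = b i" using assms(2,3) that Ints_fixed by simp
    finally show ?thesis .
  qed
  moreover from this have "\<phi> c0 = c0" using rigid by blast
  moreover have "rational_vec y" by (simp add: rational_vec_def y_def rational)
  ultimately show ?thesis by auto
qed

lemma core_normal_shift_rational:
  fixes a :: "nat \<Rightarrow> real^'d"
  assumes prim: "\<forall>i<n. primitive_vec (a i)" and b: "\<forall>i<n. b i \<in> \<int>"
    and lattice: "lattice_polytope (polyh n a b)" and full: "aff_dim (polyh n a b) = int CARD('d)"
  shows "\<exists>y. rational_vec y \<and> (\<forall>i\<in>core_normal_idx n a b. a i \<bullet> y + qcd_inv n a b \<in> \<int>)"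
proof -
  define c0 where "c0 = qcd_inv n a b"
  define I where "I = core_normal_idx n a b"
  have a: "integral_vec (a i)" "a i \<noteq> 0" if "i < n" for i
    using prim that by (auto simp: primitive_vec_def)
  have "bounded (polyh n a b)"
    using lattice unfolding lattice_polytope_def
    by (metis compact_convex_hull compact_imp_bounded finite_imp_compact)
  have "polyh n a b \<noteq> {}" using full by auto
  then have "interior (polyh n a b) \<noteq> {}"
    using full convex_shrunk[of n a b 0] by (simp add: interior_rel_interior_gen rel_interior_eq_empty polyh_eq_shrunk_0)
  then obtain c where "c > 0" "shrunk n a b c \<noteq> {}"
    using shrunk_nonempty_of_interior a(2) by blast
  note c0 = qcd_inv_greatest[OF \<open>bounded (polyh n a b)\<close> this, folded c0_def]
  have core: "core n a b = shrunk n a b c0" by (simp add: core_def c0_def)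
  have "\<exists>y0\<in>shrunk n a b c0. \<forall>j\<in>{j. j < n \<and> j \<notin> I}. a j \<bullet> y0 < b j - c0"
  proof (rule convex_common_strict_point[OF convex_shrunk c0(2)])
    show "\<forall>j\<in>{j. j < n \<and> j \<notin> I}. \<forall>y\<in>shrunk n a b c0. a j \<bullet> y \<le> b j - c0"
      by (simp add: shrunk_def)
    show "\<forall>j\<in>{j. j < n \<and> j \<notin> I}. \<exists>y\<in>shrunk n a b c0. a j \<bullet> y < b j - c0"
      by (force simp: I_def core_normal_idx_def core shrunk_def c0_def[symmetric])
  qed simp
  then obtain y0 where y0: "y0 \<in> shrunk n a b c0" "\<forall>j<n. j \<notin> I \<longrightarrow> a j \<bullet> y0 < b j - c0"
    by auto
  have I: "i < n" "a i \<bullet> y0 = b i - c0" if "i \<in> I" for i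
    using that y0(1) by (auto simp: I_def core_normal_idx_def core c0_def[symmetric])
  have rigid: "\<forall>y c. (\<forall>i\<in>I. a i \<bullet> y + c = b i) \<longrightarrow> c = c0"
  proof (intro allI impI)
    fix y c assume "\<forall>i\<in>I. a i \<bullet> y + c = b i"
    moreover have "\<forall>i\<in>I. a i \<bullet> y0 = b i - c0" using I(2) by blast
    ultimately show "c = c0" using core_shift_unique[OF c0(3) c0(1) _ y0(2)] by blast
  qed
  have "\<exists>y. rational_vec y \<and> (\<forall>i\<in>I. a i \<bullet> y + c0 = b i)"
    by (rule rational_solution_of_rigid_system[of I a b y0 c0, OF _ _ _ rigid]) (use a(1) b I in auto)
  then obtain y where y: "rational_vec y" "\<forall>i\<in>I. a i \<bullet> y + c0 = b i" by blast
  have "\<forall>i\<in>I. a i \<bullet> y + c0 \<in> \<int>" using y(2) b I(1) by simp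
  with y(1) show ?thesis unfolding I_def[symmetric] c0_def[symmetric] by blast
qed

theorem mainTheorem7:
  shows "(\<forall>(m::nat) (a :: nat \<Rightarrow> real^'d) (\<epsilon>::real).
            (\<forall>i<m. integral_vec (a i)) \<and>
            (\<exists>l::nat \<Rightarrow> real. (\<forall>i<m. l i \<ge> 0) \<and> (\<exists>i<m. l i \<noteq> 0) \<and>
                 (\<Sum>i<m. l i *\<^sub>R a i) = 0) \<and>
            \<epsilon> > 0
          \<longrightarrow> finite {c::real. 0 < c \<and> c \<le> 1 / \<epsilon> \<and>
                                 (\<exists>x::real^'d. \<forall>i<m. a i \<bullet> x + c \<in> \<int>)})
       \<and>
         (\<forall>(n::nat) (a :: nat \<Rightarrow> real^'d) (b :: nat \<Rightarrow> real).
            (\<forall>i<n. primitive_vec (a i)) \<and> (\<forall>i<n. b i \<in> \<int>) \<and>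
            irredundant n a b \<and>
            lattice_polytope (polyh n a b) \<and>
            aff_dim (polyh n a b) = int CARD('d)
          \<longrightarrow> (\<exists>y::real^'d. rational_vec y \<and>
                 (\<forall>i\<in>core_normal_idx n a b. a i \<bullet> y + qcd_inv n a b \<in> \<int>)))"
proof (intro conjI allI impI)
  fix m :: nat and a :: "nat \<Rightarrow> real^'d" and \<epsilon> :: real
  assume "(\<forall>i<m. integral_vec (a i)) \<and>
    (\<exists>l. (\<forall>i<m. l i \<ge> 0) \<and> (\<exists>i<m. l i \<noteq> 0) \<and> (\<Sum>i<m. l i *\<^sub>R a i) = 0) \<and> \<epsilon> > 0"
  then obtain l k where a: "\<forall>i<m. integral_vec (a i)" and l: "\<forall>i<m. l i \<ge> 0" "(\<Sum>i<m. l i *\<^sub>R a i) = 0"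
    and k: "k < m" "l k \<noteq> 0"
    by blast
  have "(\<Sum>i<m. l i) > 0" using l(1) k by (intro sum_pos2[of _ k]) (auto simp: order_less_le)
  then obtain D :: int where D: "D > 0" "\<forall>x c. (\<forall>i<m. a i \<bullet> x + c \<in> \<int>) \<longrightarrow> of_int D * c \<in> \<int>"
    using lattice_shift_common_denominator[OF a l(2)] by auto
  show "finite {c. 0 < c \<and> c \<le> 1 / \<epsilon> \<and> (\<exists>x::real^'d. \<forall>i<m. a i \<bullet> x + c \<in> \<int>)}"
    by (rule finite_subset[OF _ finite_bounded_Ints_scaled[OF D(1), of "1 / \<epsilon>"]]) (use D(2) in blast)
next
  fix n :: nat and a :: "nat \<Rightarrow> real^'d" and b :: "nat \<Rightarrow> real"
  assume "(\<forall>i<n. primitive_vec (a i)) \<and> (\<forall>i<n. b i \<in> \<int>) \<and> irredundant n a b \<and>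
    lattice_polytope (polyh n a b) \<and> aff_dim (polyh n a b) = int CARD('d)"
  then show "\<exists>y. rational_vec y \<and> (\<forall>i\<in>core_normal_idx n a b. a i \<bullet> y + qcd_inv n a b \<in> \<int>)"
    using core_normal_shift_rational[of n a b] by blast
qed

end
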